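(* Let $\Phi$ be an irreducible crystallographic root system, $k$ a positive integer, $R$ a dominant region of the $k$-Catalan arrangement of $\Phi$, $B$ the pseudomaximal alcove of $R$, $t\le k$ a positive integer and $\alpha\in\Phi^+$. If $\langle x_0,\alpha\rangle>t$ for some $x_0\in R$, then $\langle x,\alpha\rangle>t$ for all $x\in B$.
   Context: $\Phi$ lives in a Euclidean space $V$ with inner product $\langle\cdot,\cdot\rangle$, simple system $S$, positive system $\Phi^+$. $H_\alpha^r=\{x\mid\langle x,\alpha\rangle=r\}$. The $K$-Catalan arrangement consists of $H_\alpha^r$, $\alpha\in\Phi$, $r\in\{0,\ldots,K\}$; regions are components of its complement, dominant if $\langle x,\alpha\rangle>0$ for all $\alpha\in\Phi^+$, $x\in R$. Alcoves are the connected components of the complement of all $H_\alpha^r$, $\alpha\in\Phi$, $r\in\mathbb{Z}$; for an alcove $A$ and $\alpha\in\Phi^+$, $r(A,\alpha)$ is the unique integer $r$ with $r-1<\langle x,\alpha\rangle<r$ on $A$. Root poset: $\alpha\le\beta$ iff $\beta-\alpha$ is a nonnegative integer combination of $S$; ideals are down-closed. For a dominant region $R$ of the $K$-Catalan arrangement, $\theta(R)=(I_1,\ldots,I_K)$ with $I_i=\{\alpha\in\Phi^+\mid\langle x,\alpha\rangle<i\ \forall x\in R\}$; $\theta$ is known to be a bijection onto geometric chains of $K$ ideals (chains $I_1\subseteq\cdots\subseteq I_K$ with $J_i=\Phi^+\setminus I_i$ such that $(I_i+I_j)\cap\Phi^+\subseteq I_{i+j}$ for $i+j\le K$ and $(J_i+J_j)\cap\Phi^+\subseteq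 J_{i+j}$ for $i,j\in\{0,\ldots,K\}$, with $I_0=\varnothing$, $J_0=\Phi^+$, $J_i=J_K$ for $i>K$), and bounded regions correspond to positive chains ($S\subseteq I_K$). For a chain $\mathcal{I}$ of $K$ ideals, $r_\alpha(\mathcal{I})=\min\{r_1+\cdots+r_m\mid\alpha=\alpha_1+\cdots+\alpha_m,\alpha_i\in I_{r_i}\}$ ($\infty$ if none). For a bounded dominant region with chain $\mathcal{I}$, its maximal alcove is the alcove $B$ with $r(B,\alpha)=r_\alpha(\mathcal{I})$ for all $\alpha\in\Phi^+$. For a dominant region $R$ of the $k$-Catalan arrangement with $\mathcal{I}=\theta(R)$, let $\underline{\mathcal{I}}=(I_1,\ldots,I_k,\underline{I}_{k+1})$ with $\underline{I}_{k+1}=\bigcup_{i+j=k+1}((I_i+I_j)\cap\Phi^+)\cup I_k\cup S$ (a positive geometric chain of $k+1$ ideals); the pseudomaximal alcove of $R$ is the maximal alcove of the bounded dominant region $\theta^{-1}(\underline{\mathcal{I}})$ of the $(k+1)$-Catalan arrangement, i.e. the alcove $B$ with $r(B,\alpha)=r_\alpha(\underline{\mathcal{I}})$ for all $\alpha\in\Phi^+$. *)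

theory Defs
  imports "HOL-Analysis.Analysis" "HOL-Library.Extended_Nat"
begin

definition root_system :: "'a::euclidean_space set \<Rightarrow> bool" where
  "root_system \<Phi> \<longleftrightarrow> finite \<Phi> \<and> 0 \<notin> \<Phi> \<and> span \<Phi> = UNIV \<and>
     (\<forall>\<alpha>\<in>\<Phi>. \<forall>c::real. c *\<^sub>R \<alpha> \<in> \<Phi> \<longleftrightarrow> c = 1 \<or> c = -1) \<and>
     (\<forall>\<alpha>\<in>\<Phi>. \<forall>\<beta>\<in>\<Phi>. \<beta> - (2 * (\<beta> \<bullet> \<alpha>) / (\<alpha> \<bullet> \<alpha>)) *\<^sub>R \<alpha> \<in> \<Phi>)"

definition crystallographic :: "'a::euclidean_space set \<Rightarrow> bool" where
  "crystallographic \<Phi> \<longleftrightarrow> (\<forall>\<alpha>\<in>\<Phi>. \<forall>\<beta>\<in>\<Phi>. 2 * (\<beta> \<bullet> \<alpha>) / (\<alpha> \<bullet> \<alpha>) \<in> \<int>)"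

definition irreducible_rs :: "'a::euclidean_space set \<Rightarrow> bool" where
  "irreducible_rs \<Phi> \<longleftrightarrow> \<not> (\<exists>A B. A \<union> B = \<Phi> \<and> A \<noteq> {} \<and> B \<noteq> {} \<and>
       (\<forall>a\<in>A. \<forall>b\<in>B. a \<bullet> b = 0))"

definition nonneg_comb :: "'a::euclidean_space set \<Rightarrow> 'a \<Rightarrow> bool" where
  "nonneg_comb S v \<longleftrightarrow> (\<exists>c::'a \<Rightarrow> real. (\<forall>s\<in>S. c s \<ge> 0) \<and> v = (\<Sum>s\<in>S. c s *\<^sub>R s))"

definition simple_system :: "'a::euclidean_space set \<Rightarrow> 'a set \<Rightarrow> bool" where
  "simple_system \<Phi> S \<longleftrightarrow> S \<subseteq> \<Phi> \<and> independent S \<and>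
     (\<forall>\<beta>\<in>\<Phi>. nonneg_comb S \<beta> \<or> nonneg_comb S (- \<beta>))"

definition pos_roots :: "'a::euclidean_space set \<Rightarrow> 'a set \<Rightarrow> 'a set" where
  "pos_roots \<Phi> S = {\<beta>\<in>\<Phi>. nonneg_comb S \<beta>}"

definition cat_complement :: "'a::euclidean_space set \<Rightarrow> nat \<Rightarrow> 'a set" where
  "cat_complement \<Phi> K = - (\<Union>\<alpha>\<in>\<Phi>. \<Union>r\<in>{0..K}. {x. x \<bullet> \<alpha> = real r})"

definition cat_regions :: "'a::euclidean_space set \<Rightarrow> nat \<Rightarrow> 'a set set" where
  "cat_regions \<Phi> K = {connected_component_set (cat_complement \<Phi> K) x | x. x \<in> cat_complement \<Phi> K}"

definition dominant_region :: "'a::euclidean_space set \<Rightarrow> 'a set \<Rightarrow> nat \<Rightarrow> 'a set \<Rightarrow> bool" where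
  "dominant_region \<Phi> S K R \<longleftrightarrow> R \<in> cat_regions \<Phi> K \<and>
     (\<forall>x\<in>R. \<forall>\<alpha>\<in>pos_roots \<Phi> S. x \<bullet> \<alpha> > 0)"

definition alcove_complement :: "'a::euclidean_space set \<Rightarrow> 'a set" where
  "alcove_complement \<Phi> = - (\<Union>\<alpha>\<in>\<Phi>. \<Union>r::int. {x. x \<bullet> \<alpha> = of_int r})"

definition alcoves :: "'a::euclidean_space set \<Rightarrow> 'a set set" where
  "alcoves \<Phi> = {connected_component_set (alcove_complement \<Phi>) x | x. x \<in> alcove_complement \<Phi>}"

definition theta_ideal :: "'a::euclidean_space set \<Rightarrow> 'a set \<Rightarrow> 'a set \<Rightarrow> nat \<Rightarrow> 'a set" where
  "theta_ideal \<Phi> S R i = {\<alpha>\<in>pos_roots \<Phi> S. \<forall>x\<in>R. x \<bullet> \<alpha> < real i}"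

definition sumset :: "'a::ab_group_add set \<Rightarrow> 'a set \<Rightarrow> 'a set" where
  "sumset A B = {a + b | a b. a \<in> A \<and> b \<in> B}"

text \<open>The chain \<open>\<theta>(R)\<close> extended by \<open>\<underline>I_{k+1}\<close>; a chain of K ideals is encoded as
  a function on indices, with value {} outside 1..K.\<close>
definition under_chain :: "'a::euclidean_space set \<Rightarrow> 'a set \<Rightarrow> nat \<Rightarrow> 'a set \<Rightarrow> nat \<Rightarrow> 'a set" where
  "under_chain \<Phi> S k R i =
     (if 1 \<le> i \<and> i \<le> k then theta_ideal \<Phi> S R i
      else if i = k + 1 then
        \<Union>{sumset (theta_ideal \<Phi> S R a) (theta_ideal \<Phi> S R b) \<inter> pos_roots \<Phi> S
            | a b. 1 \<le> a \<and> 1 \<le> b \<and> a + b = k + 1}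
        \<union> theta_ideal \<Phi> S R k \<union> S
      else {})"

text \<open>\<open>r_\<alpha>(\<I>)\<close> for a chain of K ideals, \<infinity> if no decomposition exists.\<close>
definition r_chain :: "nat \<Rightarrow> (nat \<Rightarrow> 'a::euclidean_space set) \<Rightarrow> 'a \<Rightarrow> enat" where
  "r_chain K I \<alpha> = (INF ps \<in> {ps. ps \<noteq> [] \<and> (\<forall>(\<beta>, r)\<in>set ps. 1 \<le> r \<and> r \<le> K \<and> \<beta> \<in> I r)
                                \<and> sum_list (map fst ps) = \<alpha>}.
                     enat (sum_list (map snd ps)))"

text \<open>B is the maximal alcove of the bounded dominant region with chain I (of K ideals):
  the alcove with \<open>r(B,\<alpha>) = r_\<alpha>(I)\<close> for all positive roots.\<close>
definition is_max_alcove :: "'a::euclidean_space set \<Rightarrow> 'a set \<Rightarrow> nat \<Rightarrow> (nat \<Rightarrow> 'a set) \<Rightarrow> 'a set \<Rightarrow> bool" where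
  "is_max_alcove \<Phi> S K I B \<longleftrightarrow> B \<in> alcoves \<Phi> \<and>
     (\<forall>\<alpha>\<in>pos_roots \<Phi> S. \<exists>n::nat. r_chain K I \<alpha> = enat n \<and>
        (\<forall>x\<in>B. real n - 1 < x \<bullet> \<alpha> \<and> x \<bullet> \<alpha> < real n))"

definition pseudomax_alcove :: "'a::euclidean_space set \<Rightarrow> 'a set \<Rightarrow> nat \<Rightarrow> 'a set \<Rightarrow> 'a set \<Rightarrow> bool" where
  "pseudomax_alcove \<Phi> S k R B \<longleftrightarrow> is_max_alcove \<Phi> S (k + 1) (under_chain \<Phi> S k R) B"

end

theory Submission
  imports Defs
begin

text \<open>If a point \<open>x\<^sub>0\<close> of \<open>R\<close> has \<open>\<langle>x\<^sub>0,\<alpha>\<rangle> > t\<close>, then \<open>\<alpha>\<close> has no decomposition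
  \<open>\<alpha> = \<Sum> \<beta>\<^sub>j\<close> with \<open>\<beta>\<^sub>j\<close> in the ideal of index \<open>r\<^sub>j\<close> and \<open>\<Sum> r\<^sub>j \<le> t\<close>: every index would be
  at most \<open>t \<le> k\<close>, so only ideals of \<open>\<theta>(R)\<close> occur, and \<open>x\<^sub>0\<close> would satisfy
  \<open>\<langle>x\<^sub>0,\<alpha>\<rangle> < \<Sum> r\<^sub>j \<le> t\<close>. Hence \<open>r\<^sub>\<alpha>\<close> of the extended chain exceeds \<open>t\<close>, and on the
  pseudomaximal alcove \<open>\<langle>x,\<alpha>\<rangle> > r\<^sub>\<alpha> - 1 \<ge> t\<close>.\<close>

lemma inner_sum_list_less:
  fixes x :: "'a::real_inner"
  assumes "ps \<noteq> []" and "\<forall>(\<beta>, r)\<in>set ps. x \<bullet> \<beta> < real r"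
  shows "x \<bullet> sum_list (map fst ps) < real (sum_list (map snd ps))"
  using assms
proof (induction ps)
  case Nil
  then show ?case by simp
next
  case (Cons p ps)
  obtain \<beta> r where p: "p = (\<beta>, r)" by (cases p)
  have head: "x \<bullet> \<beta> < real r" using Cons.prems p by auto
  show ?case
  proof (cases "ps = []")
    case True
    then show ?thesis using head p by simp
  next
    case False
    then have "x \<bullet> sum_list (map fst ps) < real (sum_list (map snd ps))"
      using Cons by auto
    then show ?thesis using head p by (simp add: inner_right_distrib)
  qed
qed

lemma r_chain_greater:
  fixes x \<alpha> :: "'a::euclidean_space"
  assumes below: "\<And>r \<beta>. 1 \<le> r \<Longrightarrow> r \<le> t \<Longrightarrow> \<beta> \<in> I r \<Longrightarrow> x \<bullet> \<beta> < real r"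
    and above: "real t \<le> x \<bullet> \<alpha>"
  shows "enat t < r_chain K I \<alpha>"
proof -
  have "t + 1 \<le> sum_list (map snd ps)"
    if ps: "ps \<noteq> []" "\<forall>(\<beta>, r)\<in>set ps. 1 \<le> r \<and> r \<le> K \<and> \<beta> \<in> I r"
      "sum_list (map fst ps) = \<alpha>" for ps
  proof (rule ccontr)
    assume "\<not> ?thesis"
    then have small: "sum_list (map snd ps) \<le> t" by simp
    have "\<forall>(\<beta>, r)\<in>set ps. x \<bullet> \<beta> < real r"
    proof clarify
      fix \<beta> r assume mem: "(\<beta>, r) \<in> set ps"
      then have "r \<le> sum_list (map snd ps)"
        by (intro member_le_sum_list) (force, simp)
      then show "x \<bullet> \<beta> < real r"
        using below ps(2) mem small by fastforce
    qed
    from inner_sum_list_less[OF ps(1) this] ps(3) small above show False by simp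
  qed
  then have "enat (t + 1) \<le> r_chain K I \<alpha>"
    unfolding r_chain_def by (intro INF_greatest) auto
  then show ?thesis by (simp add: Suc_ile_eq)
qed

lemma under_chain_below:
  assumes "1 \<le> i" and "i \<le> k"
  shows "under_chain \<Phi> S k R i = theta_ideal \<Phi> S R i"
  using assms by (simp add: under_chain_def)

lemma theta_ideal_inner_less:
  assumes "\<beta> \<in> theta_ideal \<Phi> S R i" and "x \<in> R"
  shows "x \<bullet> \<beta> < real i"
  using assms by (simp add: theta_ideal_def)

lemma max_alcove_inner_greater:
  assumes "is_max_alcove \<Phi> S K I B" and "\<alpha> \<in> pos_roots \<Phi> S"
    and "enat t < r_chain K I \<alpha>" and "x \<in> B"
  shows "real t < x \<bullet> \<alpha>"
proof -
  obtain n :: nat where n: "r_chain K I \<alpha> = enat n"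
    and "\<forall>x\<in>B. real n - 1 < x \<bullet> \<alpha> \<and> x \<bullet> \<alpha> < real n"
    using assms(1,2) unfolding is_max_alcove_def by blast
  then have "real n - 1 < x \<bullet> \<alpha>" using \<open>x \<in> B\<close> by blast
  moreover have "t < n" using assms(3) n by simp
  ultimately show ?thesis by linarith
qed

theorem lemma12:
  fixes \<Phi> S :: "'a::euclidean_space set" and k t :: nat
    and R B :: "'a set" and \<alpha> x\<^sub>0 :: 'a
  assumes "root_system \<Phi>" and "crystallographic \<Phi>" and "irreducible_rs \<Phi>"
    and "simple_system \<Phi> S"
    and "k \<ge> 1"
    and "dominant_region \<Phi> S k R"
    and "pseudomax_alcove \<Phi> S k R B"
    and "1 \<le> t" and "t \<le> k"
    and "\<alpha> \<in> pos_roots \<Phi> S"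
    and "x\<^sub>0 \<in> R" and "x\<^sub>0 \<bullet> \<alpha> > real t"
  shows "\<forall>x\<in>B. x \<bullet> \<alpha> > real t"
proof
  fix x assume "x \<in> B"
  have "enat t < r_chain (k + 1) (under_chain \<Phi> S k R) \<alpha>"
  proof (rule r_chain_greater)
    fix r \<beta> assume "1 \<le> r" "r \<le> t" "\<beta> \<in> under_chain \<Phi> S k R r"
    then have "\<beta> \<in> theta_ideal \<Phi> S R r"
      using under_chain_below \<open>t \<le> k\<close> by (metis le_trans)
    then show "x\<^sub>0 \<bullet> \<beta> < real r" using theta_ideal_inner_less \<open>x\<^sub>0 \<in> R\<close> by blast
  next
    show "real t \<le> x\<^sub>0 \<bullet> \<alpha>" using \<open>x\<^sub>0 \<bullet> \<alpha> > real t\<close> by simp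
  qed
  then show "real t < x \<bullet> \<alpha>"
    using max_alcove_inner_greater \<open>pseudomax_alcove \<Phi> S k R B\<close> \<open>\<alpha> \<in> pos_roots \<Phi> S\<close> \<open>x \<in> B\<close>
    unfolding pseudomax_alcove_def by blast
qed

end
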